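(* As formal power series in $t$, $$\sum_{n\ge0}R_{1,n}t^n=R_{1,0}\,\frac{Z^{(G_r)}(0,-ty_2,-ty_3,\dots,-ty_{2r+1})}{Z^{(G_r)}(-ty_1,-ty_2,\dots,-ty_{2r+1})},$$ with $y_{2\alpha-1}=\frac{R_{\alpha-1,0}R_{\alpha,1}}{R_{\alpha,0}R_{\alpha-1,1}}$ ($1\le\alpha\le r+1$) and $y_{2\alpha}=\frac{R_{\alpha-1,0}R_{\alpha+1,1}}{R_{\alpha,0}R_{\alpha,1}}$ ($1\le\alpha\le r$).
   Context: Fix $r\ge1$, $I_r=\{1,\dots,r\}$. Let $R_{1,0},\dots,R_{r,0},R_{1,1},\dots,R_{r,1}$ be algebraically independent indeterminates over $\mathbb Q$ and $(R_{\alpha,n})_{0\le\alpha\le r+1,n\in\mathbb Z}$ the $A_r$ $Q$-system: the unique family of nonzero elements of $\mathbb Q(R_{1,0},\dots,R_{r,1})$ with these initial values, $R_{0,n}=R_{r+1,n}=1$, and $R_{\alpha,n+1}R_{\alpha,n-1}=R_{\alpha,n}^2+R_{\alpha+1,n}R_{\alpha-1,n}$ ($\alpha\in I_r$, $n\in\mathbb Z$). The graph $G_r$ has vertices $1,\dots,2r+1$ and edges $\{1,2\}$, $\{2k,2k+1\}$ ($1\le k\le r$), $\{2k-2,2k\}$ and $\{2k-1,2k\}$ ($2\le k\le r$). A hard particle configuration is a set of vertices no two of which are adjacent; with vertex weights $z_1,\dots,z_{2r+1}$, $Z^{(G_r)}(z_1,\dots,z_{2r+1})=\sum_C\prod_{i\in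 C}z_i$, summed over all hard particle configurations $C$ on $G_r$ (including the empty one). *)

theory Defs
  imports "HOL-Library.Poly_Mapping" "HOL-Computational_Algebra.Fraction_Field"
    "HOL-Computational_Algebra.Formal_Power_Series"
begin

text \<open>The field Q(R_{1,0},...,R_{r,1}): fractions of polynomials with rational
  coefficients in the indeterminates X_0, X_1, X_2, ... (monomials are finitely supported
  exponent maps nat =>0 nat).  R_{alpha,0} is X_(2 alpha), R_{alpha,1} is X_(2 alpha + 1).\<close>

type_synonym ratfun = "((nat \<Rightarrow>\<^sub>0 nat) \<Rightarrow>\<^sub>0 rat) fract"

definition qvar :: "nat \<Rightarrow> ratfun" where
  "qvar i = Fraction_Field.Fract (Poly_Mapping.single (Poly_Mapping.single i 1) 1) 1"

text \<open>The A_r Q-system with the given generic initial data (values at alpha > r+1 irrelevant).\<close>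
definition is_Q_system :: "nat \<Rightarrow> (nat \<Rightarrow> int \<Rightarrow> ratfun) \<Rightarrow> bool" where
  "is_Q_system r R \<longleftrightarrow>
     (\<forall>n. R 0 n = 1 \<and> R (r+1) n = 1) \<and>
     (\<forall>\<alpha>\<in>{1..r}. R \<alpha> 0 = qvar (2*\<alpha>) \<and> R \<alpha> 1 = qvar (2*\<alpha>+1)) \<and>
     (\<forall>\<alpha>\<in>{1..r}. \<forall>n. R \<alpha> n \<noteq> 0) \<and>
     (\<forall>\<alpha>\<in>{1..r}. \<forall>n. R \<alpha> (n+1) * R \<alpha> (n-1) = (R \<alpha> n)^2 + R (\<alpha>+1) n * R (\<alpha>-1) n)"

definition G_edges :: "nat \<Rightarrow> nat set set" where
  "G_edges r = {{1,2}} \<union> {{2*k, 2*k+1} | k. 1 \<le> k \<and> k \<le> r}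
     \<union> {{2*k-2, 2*k} | k. 2 \<le> k \<and> k \<le> r} \<union> {{2*k-1, 2*k} | k. 2 \<le> k \<and> k \<le> r}"

definition hard_particle_conf :: "nat \<Rightarrow> nat set \<Rightarrow> bool" where
  "hard_particle_conf r C \<longleftrightarrow> C \<subseteq> {1..2*r+1} \<and>
     (\<forall>i\<in>C. \<forall>j\<in>C. {i,j} \<notin> G_edges r)"

definition Z_G :: "nat \<Rightarrow> (nat \<Rightarrow> 'a::comm_ring_1) \<Rightarrow> 'a" where
  "Z_G r z = (\<Sum>C\<in>{C. hard_particle_conf r C}. \<Prod>i\<in>C. z i)"

definition y_wt :: "(nat \<Rightarrow> int \<Rightarrow> ratfun) \<Rightarrow> nat \<Rightarrow> ratfun" where
  "y_wt R i = (if odd i then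
       (let \<alpha> = (i+1) div 2 in R (\<alpha>-1) 0 * R \<alpha> 1 / (R \<alpha> 0 * R (\<alpha>-1) 1))
     else
       (let \<alpha> = i div 2 in R (\<alpha>-1) 0 * R (\<alpha>+1) 1 / (R \<alpha> 0 * R \<alpha> 1)))"

end

theory Submission
  imports Defs
begin

(*
  Order the vertices 1,...,2r+1 of G_r linearly; a vertex i is adjacent to
  i-1, i+1 and, when i is even, to i-2 and i+2.  Hence the hard particle partition
  function restricted to the tail {m,...,2r+1} obeys the transfer recursion
      W(m) = W(m+1) + z_m W(m + gap m),   gap m = 3 (m even), 2 (m odd),
  obtained by deciding whether m is occupied.

  Let W_n be the tail partition function with the time-n weights y_i(n) (the weights y_i of
  the statement with the Q-system evaluated at times n, n+1), i.e. with z_i = -t y_i(n).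
  The Q-system relations give two identities between the weights at times n and n+1
  (sum_of_weights_shift, product_of_weights_shift), and a purely algebraic "shift lemma"
  turns them into W_n(2k+1) = W_{n+1}(2k).  For k = 0 this says that the full partition
  function Z = W_n(1) does not depend on n; for k = 1, combined with the recursion at
  vertex 1, it gives  R_{1,n} W_n(2) = R_{1,n} Z + t R_{1,n+1} W_{n+1}(2).  Summing these
  relations as power series (telescoping argument fps_zero_if_divisible_by_X_forever)
  yields  (sum_n R_{1,n} t^n) Z = R_{1,0} W_0(2), which is the theorem.
*)

section \<open>The graph G_r and its hard particle configurations\<close>

definition adj :: "nat \<Rightarrow> nat \<Rightarrow> bool" where
  "adj i j \<longleftrightarrow> j = i+1 \<or> i = j+1 \<or> (even i \<and> (j = i+2 \<or> i = j+2))"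

lemma G_edges_iff_adj:
  assumes "1 \<le> i" "1 \<le> j" "i \<le> 2*r+1" "j \<le> 2*r+1"
  shows "{i,j} \<in> G_edges r \<longleftrightarrow> adj i j"
proof
  assume "{i,j} \<in> G_edges r"
  then show "adj i j"
    unfolding G_edges_def adj_def by (auto simp: doubleton_eq_iff)
next
  have consecutive: "{a, a+1} \<in> G_edges r" if "1 \<le> a" "a+1 \<le> 2*r+1" for a
  proof (cases "a = 1")
    case True
    then show ?thesis unfolding G_edges_def by auto
  next
    case a_ne_1: False
    show ?thesis
    proof (cases "even a")
      case True
      then obtain k where "a = 2*k" by auto
      then have "{a,a+1} \<in> {{2*k, 2*k+1} | k. 1 \<le> k \<and> k \<le> r}" using that by auto
      then show ?thesis unfolding G_edges_def by blast
    next
      case False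
      then obtain k where "a = 2*k+1" using oddE by blast
      then have "{a,a+1} \<in> {{2*k-1, 2*k} | k. 2 \<le> k \<and> k \<le> r}" using that a_ne_1
        by (auto intro!: exI[of _ "k+1"])
      then show ?thesis unfolding G_edges_def by blast
    qed
  qed
  have even_distance_two: "{a, a+2} \<in> G_edges r" if "even a" "1 \<le> a" "a+2 \<le> 2*r+1" for a
  proof -
    obtain k where "a = 2*k" using \<open>even a\<close> by (rule evenE)
    then have "{a,a+2} \<in> {{2*k-2, 2*k} | k. 2 \<le> k \<and> k \<le> r}" using that
      by (auto intro!: exI[of _ "k+1"])
    then show ?thesis unfolding G_edges_def by blast
  qed
  have swap: "{i,j} = {j,i}" by auto
  assume "adj i j"
  then show "{i,j} \<in> G_edges r"
    unfolding adj_def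
  proof (elim disjE conjE)
    assume "j = i+1" then show ?thesis using consecutive[of i] assms by auto
  next
    assume "i = j+1" then show ?thesis using consecutive[of j] assms swap by auto
  next
    assume "even i" "j = i+2" then show ?thesis using even_distance_two[of i] assms by auto
  next
    assume "even i" "i = j+2" then show ?thesis using even_distance_two[of j] assms swap by auto
  qed
qed

lemma hard_particle_conf_iff:
  "hard_particle_conf r C \<longleftrightarrow> C \<subseteq> {1..2*r+1} \<and> (\<forall>i\<in>C. \<forall>j\<in>C. \<not> adj i j)"
  unfolding hard_particle_conf_def using G_edges_iff_adj[of _ _ r]
  by (smt (verit, best) atLeastAtMost_iff subset_eq)

section \<open>Tail partition functions and the transfer recursion\<close>

text \<open>If vertex m is occupied, the next vertex that may be occupied is m + gap m.\<close>
definition gap :: "nat \<Rightarrow> nat" where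
  "gap m = (if even m then 3 else 2)"

definition tail_confs :: "nat \<Rightarrow> nat \<Rightarrow> nat set set" where
  "tail_confs r m = {C. hard_particle_conf r C \<and> C \<subseteq> {m..}}"

definition Z_tail :: "nat \<Rightarrow> (nat \<Rightarrow> 'a::comm_ring_1) \<Rightarrow> nat \<Rightarrow> 'a" where
  "Z_tail r z m = (\<Sum>C\<in>tail_confs r m. \<Prod>i\<in>C. z i)"

lemma finite_tail_confs: "finite (tail_confs r m)"
proof -
  have "tail_confs r m \<subseteq> Pow {1..2*r+1}"
    unfolding tail_confs_def hard_particle_conf_def by auto
  then show ?thesis by (rule finite_subset) auto
qed

lemma tail_confs_finite_elem: "C \<in> tail_confs r m \<Longrightarrow> finite C"
  unfolding tail_confs_def hard_particle_conf_iff by (auto intro: finite_subset)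

lemma tail_confs_ge: "C \<in> tail_confs r m \<Longrightarrow> x \<in> C \<Longrightarrow> m \<le> x"
  unfolding tail_confs_def by auto

lemma Z_G_eq_Z_tail: "Z_G r z = Z_tail r z 1"
proof -
  have "{C. hard_particle_conf r C} = tail_confs r 1"
    unfolding tail_confs_def hard_particle_conf_iff by auto
  then show ?thesis unfolding Z_G_def Z_tail_def by simp
qed

lemma Z_tail_0: "Z_tail r z 0 = Z_tail r z 1"
proof -
  have "tail_confs r 0 = tail_confs r 1"
    unfolding tail_confs_def hard_particle_conf_iff by auto
  then show ?thesis unfolding Z_tail_def by simp
qed

lemma Z_tail_beyond:
  assumes "m > 2*r+1"
  shows "Z_tail r z m = 1"
proof -
  have "tail_confs r m = {{}}"
    using assms unfolding tail_confs_def hard_particle_conf_iff by fastforce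
  then show ?thesis unfolding Z_tail_def by simp
qed

lemma Z_tail_cong:
  assumes "\<And>i. m \<le> i \<Longrightarrow> i \<le> 2*r+1 \<Longrightarrow> z i = z' i"
  shows "Z_tail r z m = Z_tail r z' m"
  unfolding Z_tail_def
proof (intro sum.cong refl prod.cong)
  fix C i assume "C \<in> tail_confs r m" "i \<in> C"
  then have "m \<le> i" "i \<le> 2*r+1" unfolding tail_confs_def hard_particle_conf_iff by auto
  then show "z i = z' i" using assms by blast
qed

lemma tail_confs_split:
  assumes "1 \<le> m" "m \<le> 2*r+1"
  shows "tail_confs r m = tail_confs r (m+1) \<union> insert m ` tail_confs r (m + gap m)"
proof (intro equalityI subsetI)
  fix C assume C: "C \<in> tail_confs r m"
  show "C \<in> tail_confs r (m+1) \<union> insert m ` tail_confs r (m + gap m)"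
  proof (cases "m \<in> C")
    case False
    then have "C \<in> tail_confs r (m+1)" using C unfolding tail_confs_def
      by (auto simp: Suc_le_eq order.order_iff_strict)
    then show ?thesis by blast
  next
    case True
    have conf: "hard_particle_conf r C" and tail: "C \<subseteq> {m..}"
      using C unfolding tail_confs_def by auto
    have "x \<ge> m + gap m" if x: "x \<in> C - {m}" for x
    proof -
      have "x \<ge> m" "x \<noteq> m" "\<not> adj m x"
        using x tail True conf unfolding hard_particle_conf_iff by auto
      then show ?thesis unfolding adj_def gap_def by auto
    qed
    moreover have "hard_particle_conf r (C - {m})"
      using conf unfolding hard_particle_conf_iff by auto
    ultimately have "C - {m} \<in> tail_confs r (m + gap m)"
      unfolding tail_confs_def by auto
    moreover have "C = insert m (C - {m})" using True by auto
    ultimately show ?thesis by blast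
  qed
next
  fix C assume "C \<in> tail_confs r (m+1) \<union> insert m ` tail_confs r (m + gap m)"
  then show "C \<in> tail_confs r m"
    using assms unfolding tail_confs_def hard_particle_conf_iff adj_def gap_def
    by (auto split: if_splits)
qed

lemma Z_tail_split:
  assumes "1 \<le> m" "m \<le> 2*r+1"
  shows "Z_tail r z m = Z_tail r z (m+1) + z m * Z_tail r z (m + gap m)"
proof -
  have gap_pos: "gap m \<ge> 1" unfolding gap_def by auto
  have disjoint: "tail_confs r (m+1) \<inter> insert m ` tail_confs r (m + gap m) = {}"
    using tail_confs_ge[of _ r "m+1"] by fastforce
  have m_notin: "m \<notin> C" if "C \<in> tail_confs r (m + gap m)" for C
    using tail_confs_ge[OF that] gap_pos by fastforce
  have inj: "inj_on (insert m) (tail_confs r (m + gap m))"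
    by (rule inj_onI) (metis m_notin insert_ident)
  have "Z_tail r z m
      = Z_tail r z (m+1) + (\<Sum>C\<in>insert m ` tail_confs r (m + gap m). \<Prod>i\<in>C. z i)"
    unfolding Z_tail_def tail_confs_split[OF assms]
    by (rule sum.union_disjoint) (use finite_tail_confs disjoint in auto)
  also have "(\<Sum>C\<in>insert m ` tail_confs r (m + gap m). \<Prod>i\<in>C. z i)
      = (\<Sum>C\<in>tail_confs r (m + gap m). z m * (\<Prod>i\<in>C. z i))"
    using inj m_notin tail_confs_finite_elem by (simp add: sum.reindex)
  also have "\<dots> = z m * Z_tail r z (m + gap m)"
    unfolding Z_tail_def by (simp add: sum_distrib_left)
  finally show ?thesis .
qed

lemma Z_tail_rec:
  assumes "\<And>i. i > 2*r+1 \<Longrightarrow> z i = 0" and "z 0 = 0"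
  shows "Z_tail r z m = Z_tail r z (m+1) + z m * Z_tail r z (m + gap m)"
proof -
  consider "m = 0" | "m > 2*r+1" | "1 \<le> m \<and> m \<le> 2*r+1" by linarith
  then show ?thesis
  proof cases
    case 1
    then show ?thesis using assms Z_tail_0[of r z] by simp
  next
    case 2
    then show ?thesis using assms Z_tail_beyond[of r m z] Z_tail_beyond[of r "m+1" z] by simp
  qed (simp add: Z_tail_split)
qed

lemma transfer_rec_at:
  fixes W z :: "nat \<Rightarrow> 'a::comm_ring_1"
  assumes "\<And>m. W m = W (m+1) + z m * W (m + gap m)" and "m+1 = p" and "m + gap m = q"
  shows "W m = W p + z m * W q"
  using assms by metis

section \<open>The shift lemma\<close>

lemma shift_step:
  fixes W W' z z' :: "nat \<Rightarrow> 'a::comm_ring_1"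
  assumes rec: "\<And>m. W m = W (m+1) + z m * W (m + gap m)"
    and rec': "\<And>m. W' m = W' (m+1) + z' m * W' (m + gap m)"
    and L1: "z (2*k+1) + z (2*k+2) = z' (2*k) + z' (2*k+1)"
    and L2: "z (2*k+1) * z' (2*k+2) = z (2*k+2) * z' (2*k+3)"
    and next1: "W (2*k+3) = W' (2*k+2)" and next2: "W (2*k+5) = W' (2*k+4)"
  shows "W (2*k+1) = W' (2*k)"
proof -
  define A B where "A = W' (2*k+4)" and "B = W' (2*k+5)"
  have W1: "W (2*k+1) = W (2*k+2) + z (2*k+1) * W (2*k+3)"
    by (rule transfer_rec_at[OF rec]) (simp_all add: gap_def)
  have W2: "W (2*k+2) = W (2*k+3) + z (2*k+2) * W (2*k+5)"
    by (rule transfer_rec_at[OF rec]) (simp_all add: gap_def)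
  have W'0: "W' (2*k) = W' (2*k+1) + z' (2*k) * W' (2*k+3)"
    by (rule transfer_rec_at[OF rec']) (simp_all add: gap_def)
  have W'1: "W' (2*k+1) = W' (2*k+2) + z' (2*k+1) * W' (2*k+3)"
    by (rule transfer_rec_at[OF rec']) (simp_all add: gap_def)
  have W'2: "W' (2*k+2) = W' (2*k+3) + z' (2*k+2) * B"
    unfolding B_def by (rule transfer_rec_at[OF rec']) (simp_all add: gap_def)
  have W'3: "W' (2*k+3) = A + z' (2*k+3) * B"
    unfolding A_def B_def by (rule transfer_rec_at[OF rec']) (simp_all add: gap_def)
  have L2': "z (2*k+1) * (z' (2*k+2) + z' (2*k+3)) = (z (2*k+1) + z (2*k+2)) * z' (2*k+3)"
    using L2 by (simp add: algebra_simps)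
  have "W (2*k+1) = W' (2*k+2) + z (2*k+1) * W' (2*k+2) + z (2*k+2) * A"
    using W1 W2 next1 next2 unfolding A_def by (simp add: algebra_simps)
  also have "\<dots> = W' (2*k+2) + (z (2*k+1) + z (2*k+2)) * A
      + z (2*k+1) * (z' (2*k+2) + z' (2*k+3)) * B"
    using W'2 W'3 by (simp add: algebra_simps)
  also have "\<dots> = W' (2*k+2) + (z (2*k+1) + z (2*k+2)) * W' (2*k+3)"
    unfolding L2' W'3 by (simp add: algebra_simps)
  also have "\<dots> = W' (2*k)"
    using W'0 W'1 L1 by (simp add: algebra_simps)
  finally show ?thesis .
qed

lemma shift_lemma:
  fixes W W' z z' :: "nat \<Rightarrow> 'a::comm_ring_1"
  assumes rec: "\<And>m. W m = W (m+1) + z m * W (m + gap m)"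
    and rec': "\<And>m. W' m = W' (m+1) + z' m * W' (m + gap m)"
    and beyond: "\<And>m. m > 2*r+1 \<Longrightarrow> W m = 1"
    and beyond': "\<And>m. m > 2*r+1 \<Longrightarrow> W' m = 1"
    and L1: "\<And>k. k \<le> r \<Longrightarrow> z (2*k+1) + z (2*k+2) = z' (2*k) + z' (2*k+1)"
    and L2: "\<And>k. k \<le> r \<Longrightarrow> z (2*k+1) * z' (2*k+2) = z (2*k+2) * z' (2*k+3)"
  shows "W (2*k+1) = W' (2*k)"
proof (induction "r+2-k" arbitrary: k rule: less_induct)
  case less
  show ?case
  proof (cases "k \<le> r")
    case False
    then show ?thesis using beyond[of "2*k+1"] beyond'[of "2*k"] by simp
  next
    case True
    have indices: "2*(k+1) = 2*k+2" "2*(k+2) = 2*k+4" "2*k+2+1 = 2*k+3" "2*k+4+1 = 2*k+5"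
      by simp_all
    have "W (2*(k+1)+1) = W' (2*(k+1))" "W (2*(k+2)+1) = W' (2*(k+2))"
      by (rule less, use True in simp)+
    then show ?thesis
      unfolding indices by (rule shift_step[OF rec rec' L1[OF True] L2[OF True]])
  qed
qed

section \<open>The weights of the Q-system at time n\<close>

lemma Q_relation_as_sum_left:
  fixes a0 a1 b0 b1 b2 c1 :: "'a::field"
  assumes "a1 \<noteq> 0" "b0 \<noteq> 0" "b1 \<noteq> 0" and Q: "c1 * a1 = b1^2 + b2 * b0"
  shows "a0*b1/(a1*b0) + a0*b2/(a1*b1) = a0*c1/(b0*b1)"
proof -
  have "a0*b1/(a1*b0) + a0*b2/(a1*b1) = a0*(b1^2 + b2*b0)/(a1*b0*b1)"
    using assms by (simp add: field_simps power2_eq_square)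
  then show ?thesis using assms(1) unfolding Q[symmetric] by (simp add: field_simps)
qed

lemma Q_relation_as_sum_right:
  fixes a0 bm b0 b1 c0 c1 :: "'a::field"
  assumes "c0 \<noteq> 0" "b0 \<noteq> 0" "b1 \<noteq> 0" and Q: "c0 * a0 = b0^2 + b1 * bm"
  shows "bm*c1/(b0*c0) + b0*c1/(b1*c0) = a0*c1/(b0*b1)"
proof -
  have "bm*c1/(b0*c0) + b0*c1/(b1*c0) = c1*(b0^2 + b1*bm)/(c0*b0*b1)"
    using assms by (simp add: field_simps power2_eq_square)
  then show ?thesis using assms(1) unfolding Q[symmetric] by (simp add: field_simps)
qed

definition y_at :: "(nat \<Rightarrow> int \<Rightarrow> ratfun) \<Rightarrow> int \<Rightarrow> nat \<Rightarrow> ratfun" where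
  "y_at R n i = (if odd i then
       (let \<alpha> = (i+1) div 2 in R (\<alpha>-1) n * R \<alpha> (n+1) / (R \<alpha> n * R (\<alpha>-1) (n+1)))
     else
       (let \<alpha> = i div 2 in R (\<alpha>-1) n * R (\<alpha>+1) (n+1) / (R \<alpha> n * R \<alpha> (n+1))))"

lemma y_at_0: "y_at R 0 i = y_wt R i"
  unfolding y_at_def y_wt_def by simp

lemma y_at_odd: "y_at R n (2*k+1) = R k n * R (k+1) (n+1) / (R (k+1) n * R k (n+1))"
  unfolding y_at_def by simp

lemma y_at_even: "y_at R n (2*k+2) = R k n * R (k+2) (n+1) / (R (k+1) n * R (k+1) (n+1))"
proof -
  have "odd (2*k+2) = False" "(2*k+2) div 2 = k+1" by simp_all
  then show ?thesis unfolding y_at_def Let_def by simp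
qed

definition y_cut :: "nat \<Rightarrow> (nat \<Rightarrow> int \<Rightarrow> ratfun) \<Rightarrow> int \<Rightarrow> nat \<Rightarrow> ratfun" where
  "y_cut r R n i = (if 1 \<le> i \<and> i \<le> 2*r+1 then y_at R n i else 0)"

locale Q_system =
  fixes r :: nat and R :: "nat \<Rightarrow> int \<Rightarrow> ratfun"
  assumes r_pos: "r \<ge> 1" and Q: "is_Q_system r R"
begin

lemma R_0: "R 0 n = 1" and R_last: "R (r+1) n = 1"
  using Q unfolding is_Q_system_def by auto

lemma R_nonzero:
  assumes "\<alpha> \<le> r+1"
  shows "R \<alpha> n \<noteq> 0"
proof -
  consider "\<alpha> = 0" | "\<alpha> = r+1" | "\<alpha> \<in> {1..r}" using assms by fastforce
  then show ?thesis using Q R_0 R_last unfolding is_Q_system_def by cases auto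
qed

lemma Q_relation:
  assumes "1 \<le> \<alpha>" "\<alpha> \<le> r"
  shows "R \<alpha> (n+2) * R \<alpha> n = (R \<alpha> (n+1))^2 + R (\<alpha>+1) (n+1) * R (\<alpha>-1) (n+1)"
proof -
  have "R \<alpha> (m+1) * R \<alpha> (m-1) = (R \<alpha> m)^2 + R (\<alpha>+1) m * R (\<alpha>-1) m" for m
    using Q assms unfolding is_Q_system_def by auto
  from this[of "n+1"] show ?thesis by (simp add: add.assoc)
qed

text \<open>Sum of the two weights at the vertices 2k+1, 2k+2 at time n, simplified with the
  Q-system relation for R_{k+1}.\<close>
lemma weight_pair_sum:
  assumes k: "k \<le> r"
  shows "y_cut r R n (2*k+1) + y_cut r R n (2*k+2)
       = R k n * R (k+1) (n+2) / (R k (n+1) * R (k+1) (n+1))"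
proof (cases "k < r")
  case True
  have "y_at R n (2*k+1) + y_at R n (2*k+2)
      = R k n * R (k+1) (n+2) / (R k (n+1) * R (k+1) (n+1))"
    unfolding y_at_odd y_at_even
  proof (rule Q_relation_as_sum_left)
    show "R (k+1) n \<noteq> 0" "R k (n+1) \<noteq> 0" "R (k+1) (n+1) \<noteq> 0"
      using True by (auto intro!: R_nonzero)
    show "R (k+1) (n+2) * R (k+1) n = (R (k+1) (n+1))^2 + R (k+2) (n+1) * R k (n+1)"
      using Q_relation[of "k+1" n] True by (simp add: numeral_eq_Suc)
  qed
  then show ?thesis using True unfolding y_cut_def by simp
next
  case False
  then have "k = r" using k by simp
  then show ?thesis
    unfolding y_cut_def y_at_odd using R_last[of n] R_last[of "n+1"] R_last[of "n+2"]
    by (simp add: add.assoc)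
qed

text \<open>Sum of the two weights at the vertices 2k, 2k+1 at time n+1, simplified with the
  Q-system relation for R_k; it has the same value as in weight_pair_sum.\<close>
lemma weight_pair_sum_next:
  assumes k: "k \<le> r"
  shows "y_cut r R (n+1) (2*k) + y_cut r R (n+1) (2*k+1)
       = R k n * R (k+1) (n+2) / (R k (n+1) * R (k+1) (n+1))"
proof (cases k)
  case 0
  then show ?thesis
    unfolding y_cut_def using y_at_odd[of R "n+1" 0] R_0[of "n+1"] R_0[of "n+2"] R_0[of n]
    by (simp add: add.assoc)
next
  case (Suc j)
  then have j: "j+1 = k" "j+2 = k+1" by simp_all
  have "y_at R (n+1) (2*j+2) + y_at R (n+1) (2*k+1)
      = R k n * R (k+1) (n+2) / (R k (n+1) * R (k+1) (n+1))"
    unfolding y_at_odd y_at_even add.assoc one_add_one j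
  proof (rule Q_relation_as_sum_right)
    show "R k (n+2) \<noteq> 0" "R k (n+1) \<noteq> 0" "R (k+1) (n+1) \<noteq> 0"
      using k by (auto intro!: R_nonzero)
    show "R k (n+2) * R k n = (R k (n+1))^2 + R (k+1) (n+1) * R j (n+1)"
      using Q_relation[of k n] k Suc by simp
  qed
  then show ?thesis using Suc k unfolding y_cut_def by simp
qed

lemma sum_of_weights_shift:
  "k \<le> r \<Longrightarrow>
    y_cut r R n (2*k+1) + y_cut r R n (2*k+2) = y_cut r R (n+1) (2*k) + y_cut r R (n+1) (2*k+1)"
  using weight_pair_sum weight_pair_sum_next by simp

text \<open>Second gauge identity: y_{2k+1}(n) y_{2k+2}(n+1) = y_{2k+2}(n) y_{2k+3}(n+1);
  here both sides are the same product of R's.\<close>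
lemma product_of_weights_shift:
  assumes k: "k \<le> r"
  shows "y_cut r R n (2*k+1) * y_cut r R (n+1) (2*k+2)
       = y_cut r R n (2*k+2) * y_cut r R (n+1) (2*k+3)"
proof (cases "k < r")
  case False
  then show ?thesis using k unfolding y_cut_def by simp
next
  case True
  have nonzero: "R (k+1) n \<noteq> 0" "R k (n+1) \<noteq> 0" "R (k+1) (n+1) \<noteq> 0"
    "R (k+2) (n+1) \<noteq> 0" "R (k+1) (n+2) \<noteq> 0"
    using True by (auto intro!: R_nonzero)
  have three: "2*(k+1)+1 = 2*k+3" by simp
  have "y_at R n (2*k+1) * y_at R (n+1) (2*k+2) = y_at R n (2*k+2) * y_at R (n+1) (2*k+3)"
    unfolding three[symmetric] y_at_odd y_at_even add.assoc one_add_one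
    using nonzero by (simp add: field_simps)
  then show ?thesis using True unfolding y_cut_def by simp
qed

lemma y_cut_1: "y_cut r R n 1 = R 1 (n+1) / R 1 n"
  using y_at_odd[of R n 0] R_0[of n] R_0[of "n+1"] unfolding y_cut_def by simp

end

section \<open>Conservation and the generating function of R_{1,n}\<close>

definition z_at :: "nat \<Rightarrow> (nat \<Rightarrow> int \<Rightarrow> ratfun) \<Rightarrow> int \<Rightarrow> nat \<Rightarrow> ratfun fps" where
  "z_at r R n i = - (fps_const (y_cut r R n i) * fps_X)"

lemma neg_X_weight_add:
  "- (fps_const a * fps_X) + - (fps_const b * fps_X) = - (fps_const (a + b) * fps_X :: 'a::comm_ring_1 fps)"
  by (simp add: algebra_simps flip: fps_const_add)

lemma neg_X_weight_mult:
  "- (fps_const a * fps_X) * - (fps_const b * fps_X) = fps_const (a * b) * (fps_X * fps_X :: 'a::comm_ring_1 fps)"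
  by (simp add: algebra_simps flip: fps_const_mult)

lemma fps_zero_if_divisible_by_X_forever:
  fixes A :: "nat \<Rightarrow> 'a::comm_ring_1 fps"
  assumes "\<And>m. A m = fps_X * A (Suc m)"
  shows "A 0 = 0"
proof -
  have "\<forall>m. fps_nth (A m) j = 0" for j
  proof (induction j)
    case 0
    show ?case by (subst assms) simp
  next
    case (Suc j)
    then show ?case by (subst assms) simp
  qed
  then show ?thesis by (intro fps_ext) simp
qed

context Q_system
begin

abbreviation W :: "int \<Rightarrow> nat \<Rightarrow> ratfun fps" where
  "W n m \<equiv> Z_tail r (z_at r R n) m"

lemma W_rec: "W n m = W n (m+1) + z_at r R n m * W n (m + gap m)"
  by (rule Z_tail_rec) (auto simp: z_at_def y_cut_def)

lemma W_shift: "W n (2*k+1) = W (n+1) (2*k)"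
proof (rule shift_lemma[OF W_rec W_rec])
  show "\<And>m. m > 2*r+1 \<Longrightarrow> W n m = 1" "\<And>m. m > 2*r+1 \<Longrightarrow> W (n+1) m = 1"
    by (simp_all add: Z_tail_beyond)
  show "z_at r R n (2*k+1) + z_at r R n (2*k+2) = z_at r R (n+1) (2*k) + z_at r R (n+1) (2*k+1)"
    if "k \<le> r" for k
    using sum_of_weights_shift[OF that, of n] unfolding z_at_def neg_X_weight_add by simp
  show "z_at r R n (2*k+1) * z_at r R (n+1) (2*k+2) = z_at r R n (2*k+2) * z_at r R (n+1) (2*k+3)"
    if "k \<le> r" for k
    using product_of_weights_shift[OF that, of n] unfolding z_at_def neg_X_weight_mult by simp
qed

lemma W_conserved: "W (int m) 1 = W 0 1"
proof (induction m)
  case (Suc m)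
  have "W (int m) 1 = W (int m + 1) 0"
    using W_shift[of "int m" 0] by simp
  also have "\<dots> = W (int m + 1) 1" by (rule Z_tail_0)
  finally show ?case using Suc by (simp add: add.commute)
qed simp

lemma first_vertex_relation:
  "fps_const (R 1 n) * W n 2 =
     fps_const (R 1 n) * W n 1 + fps_X * (fps_const (R 1 (n+1)) * W (n+1) 2)"
proof -
  have "W n 1 = W n 2 + z_at r R n 1 * W n 3"
    by (rule transfer_rec_at[OF W_rec]) (simp_all add: gap_def)
  moreover have "W n 3 = W (n+1) 2"
    using W_shift[of n 1] by simp
  ultimately have "W n 2 = W n 1 + fps_const (y_cut r R n 1) * fps_X * W (n+1) 2"
    unfolding z_at_def by (simp add: algebra_simps)
  then have "fps_const (R 1 n) * W n 2 =
      fps_const (R 1 n) * W n 1 + fps_X * (fps_const (R 1 n * y_cut r R n 1) * W (n+1) 2)"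
    by (simp add: algebra_simps flip: fps_const_mult)
  moreover have "R 1 n * y_cut r R n 1 = R 1 (n+1)"
    unfolding y_cut_1 using R_nonzero[of 1 n] r_pos by simp
  ultimately show ?thesis by simp
qed

lemma W_constant_term: "fps_nth (W n m) 0 = 1"
proof (induction "2*r+2-m" arbitrary: m rule: less_induct)
  case less
  show ?case
  proof (cases "m > 2*r+1")
    case True
    then show ?thesis by (simp add: Z_tail_beyond)
  next
    case False
    then have "fps_nth (W n (m+1)) 0 = 1" by (intro less) simp
    then show ?thesis using W_rec[of n m] unfolding z_at_def by simp
  qed
qed

text \<open>The identity of the theorem, with the denominator multiplied out.  The series
  F_m = sum_j R_{1,m+j} t^j satisfy F_m = R_{1,m} + t F_{m+1}, so by conservation and
  first_vertex_relation the defect F_m Z - R_{1,m} W_m(2) is t times the next defect.\<close>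
lemma generating_function_identity:
  "Abs_fps (\<lambda>n. R 1 (int n)) * W 0 1 = fps_const (R 1 0) * W 0 2"
proof -
  define F where "F m = Abs_fps (\<lambda>j. R 1 (int m + int j))" for m
  have F_rec: "F m = fps_const (R 1 (int m)) + fps_X * F (Suc m)" for m
    by (rule fps_ext) (auto simp: F_def algebra_simps split: nat.split)
  define defect where "defect m = F m * W 0 1 - fps_const (R 1 (int m)) * W (int m) 2" for m
  have "defect m = fps_X * defect (Suc m)" for m
  proof -
    have "defect m = (fps_const (R 1 (int m)) + fps_X * F (Suc m)) * W 0 1
        - (fps_const (R 1 (int m)) * W (int m) 1
           + fps_X * (fps_const (R 1 (int m + 1)) * W (int m + 1) 2))"
      unfolding defect_def by (subst F_rec, subst first_vertex_relation) (rule refl)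
    also have "\<dots> = fps_X * defect (Suc m)"
      unfolding defect_def W_conserved by (simp add: algebra_simps)
    finally show ?thesis .
  qed
  then have "defect 0 = 0" by (rule fps_zero_if_divisible_by_X_forever)
  then show ?thesis unfolding defect_def F_def by simp
qed

text \<open>The two partition functions of the statement are W_0(1) and, since vertex 1 carries
  weight 0 in the numerator, W_0(2).\<close>
lemma denominator_eq: "Z_G r (\<lambda>i. - (fps_const (y_wt R i) * fps_X)) = W 0 1"
  unfolding Z_G_eq_Z_tail z_at_def y_cut_def y_at_0 by (rule Z_tail_cong) simp

lemma numerator_eq:
  "Z_G r (\<lambda>i. if i = 1 then 0 else - (fps_const (y_wt R i) * fps_X)) = W 0 2"
proof -
  let ?z = "\<lambda>i. if i = 1 then 0 else - (fps_const (y_wt R i) * fps_X)"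
  have "Z_G r ?z = Z_tail r ?z 2"
    unfolding Z_G_eq_Z_tail using Z_tail_split[of 1 r ?z] by (simp add: numeral_2_eq_2)
  also have "\<dots> = W 0 2"
    unfolding z_at_def y_cut_def y_at_0 by (rule Z_tail_cong) simp
  finally show ?thesis .
qed

end

theorem mainTheorem8:
  fixes r :: nat and R :: "nat \<Rightarrow> int \<Rightarrow> ratfun"
  assumes "r \<ge> 1" and "is_Q_system r R"
  shows "Abs_fps (\<lambda>n. R 1 (int n)) =
    fps_const (R 1 0) *
      Z_G r (\<lambda>i. if i = 1 then 0 else - (fps_const (y_wt R i) * fps_X))
    / Z_G r (\<lambda>i. - (fps_const (y_wt R i) * fps_X))"
proof -
  interpret Q_system r R using assms by unfold_locales
  have "W 0 1 \<noteq> 0"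
    using W_constant_term[of 0 1] by auto
  then show ?thesis
    unfolding numerator_eq denominator_eq generating_function_identity[symmetric] by simp
qed

end
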